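(* Let $G$ be a graph whose adjacency matrix has exactly two eigenvalues (counted with multiplicity) different from $\pm1$, namely $r>1$ and $s<-1$; all other eigenvalues are equal to $1$ or $-1$. (i) One connected component of $G$ has all vertex degrees at least $2$, and all other connected components are isomorphic to $K_2$. (ii) If $u$ and $v$ are distinct vertices of $G$ with degrees $d_u$ and $d_v$, and every neighbor of $u$ is also a neighbor of $v$, then $d_v-d_u\geq 3$.
   Context: Graphs are finite, simple and undirected; eigenvalues of a graph are those of its adjacency matrix. *)

theory Defs
  imports "Jordan_Normal_Form.Char_Poly"
begin

definition simple_graph :: "nat \<Rightarrow> (nat \<Rightarrow> nat \<Rightarrow> bool) \<Rightarrow> bool" where
  "simple_graph n E \<longleftrightarrow> (\<forall>u v. E u v \<longrightarrow> u < n \<and> v < n) \<and>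
     (\<forall>u v. E u v \<longrightarrow> E v u) \<and> (\<forall>u. \<not> E u u)"

definition adj_matrix :: "nat \<Rightarrow> (nat \<Rightarrow> nat \<Rightarrow> bool) \<Rightarrow> real mat" where
  "adj_matrix n E = mat n n (\<lambda>(i,j). if E i j then 1 else 0)"

definition neighbors :: "nat \<Rightarrow> (nat \<Rightarrow> nat \<Rightarrow> bool) \<Rightarrow> nat \<Rightarrow> nat set" where
  "neighbors n E v = {w. w < n \<and> E v w}"

definition degree :: "nat \<Rightarrow> (nat \<Rightarrow> nat \<Rightarrow> bool) \<Rightarrow> nat \<Rightarrow> nat" where
  "degree n E v = card (neighbors n E v)"

definition reachable :: "(nat \<Rightarrow> nat \<Rightarrow> bool) \<Rightarrow> nat \<Rightarrow> nat \<Rightarrow> bool" where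
  "reachable E u v \<longleftrightarrow> E\<^sup>*\<^sup>* u v"

definition components :: "nat \<Rightarrow> (nat \<Rightarrow> nat \<Rightarrow> bool) \<Rightarrow> nat set set" where
  "components n E = (\<lambda>v. {w. w < n \<and> reachable E v w}) ` {0..<n}"

definition component_is_K2 :: "(nat \<Rightarrow> nat \<Rightarrow> bool) \<Rightarrow> nat set \<Rightarrow> bool" where
  "component_is_K2 E C \<longleftrightarrow> (\<exists>a b. a \<noteq> b \<and> C = {a, b} \<and> E a b)"

end

theory Submission
  imports Defs "Jordan_Normal_Form.Schur_Decomposition"
begin

text \<open>Write A for the adjacency matrix. A Schur triangularisation of A and the Cayley-Hamilton
theorem for triangular matrices give (A - r)(A - s)(A - 1)^a(A + 1)^b = 0, and since A is symmetric
the repeated factors can be dropped. Hence A^2 = 1 + (r^2 - 1) P + (s^2 - 1) Q, where P and Q are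
the orthogonal projections onto the r- and s-eigenspaces, and trace P = 1 because r is simple.

In particular A^2 - 1 is positive semidefinite. Its 2x2 principal minors give (ii), and show that
every vertex has degree at least 1 and that a vertex of degree 1 lies in a K_2 component.
Each component C whose degrees are all at least 2 contributes at least 1 to trace P: the
diagonal of P cannot vanish on C (otherwise an s-eigenvector supported on C would be fixed by
taking absolute values, although A maps nonnegative vectors to nonnegative ones), and a column of
P restricted to C is again fixed by P. As trace P = 1, there is at most one such component, and
there is one since otherwise A^2 = 1 and P = 0.\<close>

text \<open>Square matrices of size n are modelled as real functions on pairs of indices that vanish
outside {..<n} x {..<n}; products then need no dimension side conditions.\<close>

type_synonym fmat = "nat \<Rightarrow> nat \<Rightarrow> real"

definition fm_upper :: "fmat \<Rightarrow> bool" where "fm_upper X \<longleftrightarrow> (\<forall>i j. j < i \<longrightarrow> X i j = 0)"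

definition fm_sym :: "fmat \<Rightarrow> bool" where "fm_sym X \<longleftrightarrow> (\<forall>i j. X i j = X j i)"

lemma fm_symD: "fm_sym X \<Longrightarrow> X i j = X j i" by (simp add: fm_sym_def)

context fixes n :: nat begin

definition fm_mult :: "fmat \<Rightarrow> fmat \<Rightarrow> fmat" where
  "fm_mult X Y = (\<lambda>i j. if i < n \<and> j < n then (\<Sum>k<n. X i k * Y k j) else 0)"

definition fm_one :: fmat where "fm_one = (\<lambda>i j. if i = j \<and> i < n then 1 else 0)"

definition fm_supported :: "fmat \<Rightarrow> bool" where
  "fm_supported X \<longleftrightarrow> (\<forall>i j. \<not> (i < n \<and> j < n) \<longrightarrow> X i j = 0)"

definition fm_shift :: "fmat \<Rightarrow> real \<Rightarrow> fmat" where "fm_shift X c = (\<lambda>i j. X i j - c * fm_one i j)"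

fun fm_shift_prod :: "fmat \<Rightarrow> real list \<Rightarrow> fmat" where
  "fm_shift_prod X [] = fm_one"
| "fm_shift_prod X (c # cs) = fm_mult (fm_shift X c) (fm_shift_prod X cs)"

definition fm_trace :: "fmat \<Rightarrow> real" where "fm_trace X = (\<Sum>i<n. X i i)"

definition fm_mult_vec :: "fmat \<Rightarrow> (nat \<Rightarrow> real) \<Rightarrow> nat \<Rightarrow> real" where
  "fm_mult_vec X y = (\<lambda>i. \<Sum>k<n. X i k * y k)"

definition fm_quad :: "fmat \<Rightarrow> (nat \<Rightarrow> real) \<Rightarrow> real" where
  "fm_quad X y = (\<Sum>k<n. \<Sum>l<n. y k * X k l * y l)"

lemma fm_supported_mult [simp]: "fm_supported (fm_mult X Y)"
  by (simp add: fm_supported_def fm_mult_def)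

lemma fm_supported_one [simp]: "fm_supported fm_one"
  by (simp add: fm_supported_def fm_one_def)

lemma fm_supported_shift [simp]: "fm_supported X \<Longrightarrow> fm_supported (fm_shift X c)"
  by (simp add: fm_supported_def fm_shift_def fm_one_def)

lemma fm_supported_shift_prod [simp]: "fm_supported (fm_shift_prod X cs)"
  by (cases cs) auto

lemma fm_mult_assoc: "fm_mult (fm_mult X Y) Z = fm_mult X (fm_mult Y Z)"
proof (intro ext)
  fix i j
  show "fm_mult (fm_mult X Y) Z i j = fm_mult X (fm_mult Y Z) i j"
  proof (cases "i < n \<and> j < n")
    case True
    have "(\<Sum>k<n. (\<Sum>l<n. X i l * Y l k) * Z k j) = (\<Sum>k<n. \<Sum>l<n. X i l * Y l k * Z k j)"
      by (simp add: sum_distrib_right)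
    also have "\<dots> = (\<Sum>l<n. \<Sum>k<n. X i l * Y l k * Z k j)" by (rule sum.swap)
    also have "\<dots> = (\<Sum>l<n. X i l * (\<Sum>k<n. Y l k * Z k j))"
      by (simp add: sum_distrib_left mult.assoc)
    finally show ?thesis using True by (simp add: fm_mult_def)
  qed (auto simp: fm_mult_def)
qed

lemma fm_mult_one_left: assumes "fm_supported X" shows "fm_mult fm_one X = X"
proof -
  have "fm_one i k * X k j = (if k = i then X i j else 0)" if "i < n" for i j k
    using that by (simp add: fm_one_def)
  then show ?thesis using assms by (auto simp: fm_mult_def fm_supported_def fun_eq_iff)
qed

lemma fm_mult_one_right: assumes "fm_supported X" shows "fm_mult X fm_one = X"
proof -
  have "X i k * fm_one k j = (if k = j then X i j else 0)" if "j < n" for i j k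
    using that by (simp add: fm_one_def)
  then show ?thesis using assms by (auto simp: fm_mult_def fm_supported_def fun_eq_iff)
qed

lemma fm_mult_zero_left [simp]: "fm_mult (\<lambda>_ _. 0) X = (\<lambda>_ _. 0)"
  by (simp add: fm_mult_def fun_eq_iff)

lemma fm_mult_zero_right [simp]: "fm_mult X (\<lambda>_ _. 0) = (\<lambda>_ _. 0)"
  by (simp add: fm_mult_def fun_eq_iff)

lemma fm_mult_scale_left: "fm_mult (\<lambda>i j. c * Y i j) X = (\<lambda>i j. c * fm_mult Y X i j)"
  by (auto simp: fm_mult_def fun_eq_iff sum_distrib_left algebra_simps)

lemma fm_mult_scale_right: "fm_mult X (\<lambda>i j. c * Y i j) = (\<lambda>i j. c * fm_mult X Y i j)"
  by (auto simp: fm_mult_def fun_eq_iff sum_distrib_left algebra_simps)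

lemma fm_mult_diff_left: "fm_mult (\<lambda>i j. Y i j - Z i j) X = (\<lambda>i j. fm_mult Y X i j - fm_mult Z X i j)"
  by (auto simp: fm_mult_def fun_eq_iff sum_subtractf algebra_simps)

lemma fm_mult_diff_right: "fm_mult X (\<lambda>i j. Y i j - Z i j) = (\<lambda>i j. fm_mult X Y i j - fm_mult X Z i j)"
  by (auto simp: fm_mult_def fun_eq_iff sum_subtractf algebra_simps)

lemma fm_mult_shift_left:
  "fm_supported Y \<Longrightarrow> fm_mult (fm_shift X c) Y = (\<lambda>i j. fm_mult X Y i j - c * Y i j)"
  unfolding fm_shift_def
  by (simp add: fm_mult_diff_left fm_mult_scale_left fm_mult_one_left)

lemma fm_mult_shift_right:
  "fm_supported Y \<Longrightarrow> fm_mult Y (fm_shift X c) = (\<lambda>i j. fm_mult Y X i j - c * Y i j)"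
  unfolding fm_shift_def
  by (simp add: fm_mult_diff_right fm_mult_scale_right fm_mult_one_right)

lemma fm_shift_prod_append:
  "fm_supported X \<Longrightarrow> fm_shift_prod X (xs @ ys) = fm_mult (fm_shift_prod X xs) (fm_shift_prod X ys)"
  by (induction xs) (auto simp: fm_mult_one_left fm_mult_assoc)

lemma fm_shift_commute:
  assumes "fm_supported X"
  shows "fm_mult (fm_shift X a) (fm_shift X b) = fm_mult (fm_shift X b) (fm_shift X a)"
proof -
  have "fm_mult (fm_shift X a) (fm_shift X b)
      = (\<lambda>i j. fm_mult X X i j - (a + b) * X i j + (a * b) * fm_one i j)" for a b
    using assms by (simp only: fm_mult_shift_left fm_supported_shift fm_mult_shift_right)
      (simp add: fm_shift_def algebra_simps)
  then show ?thesis by (simp add: algebra_simps)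
qed

lemma fm_shift_shift_prod_commute:
  "fm_supported X \<Longrightarrow> fm_mult (fm_shift X a) (fm_shift_prod X cs) = fm_mult (fm_shift_prod X cs) (fm_shift X a)"
proof (induction cs)
  case Nil
  then show ?case by (simp add: fm_mult_one_left fm_mult_one_right)
next
  case (Cons c cs)
  have "fm_mult (fm_shift X a) (fm_shift_prod X (c # cs))
      = fm_mult (fm_mult (fm_shift X c) (fm_shift X a)) (fm_shift_prod X cs)"
    using Cons.prems by (simp add: fm_mult_assoc [symmetric] fm_shift_commute)
  also have "\<dots> = fm_mult (fm_shift_prod X (c # cs)) (fm_shift X a)"
    using Cons by (simp add: fm_mult_assoc)
  finally show ?case .
qed

lemma fm_shift_prod_commute:
  "fm_supported X \<Longrightarrow> fm_mult (fm_shift_prod X xs) (fm_shift_prod X ys) = fm_mult (fm_shift_prod X ys) (fm_shift_prod X xs)"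
proof (induction xs)
  case Nil
  then show ?case by (simp add: fm_mult_one_left fm_mult_one_right)
next
  case (Cons c cs)
  have "fm_mult (fm_shift_prod X (c # cs)) (fm_shift_prod X ys)
      = fm_mult (fm_mult (fm_shift X c) (fm_shift_prod X ys)) (fm_shift_prod X cs)"
    using Cons by (simp add: fm_mult_assoc)
  also have "\<dots> = fm_mult (fm_shift_prod X ys) (fm_shift_prod X (c # cs))"
    using Cons.prems by (simp add: fm_shift_shift_prod_commute fm_mult_assoc)
  finally show ?case .
qed

lemma fm_shift_prod_perm:
  "fm_supported X \<Longrightarrow> mset xs = mset ys \<Longrightarrow> fm_shift_prod X xs = fm_shift_prod X ys"
proof (induction xs arbitrary: ys)
  case Nil
  then show ?case by simp
next
  case (Cons x xs)
  have "x \<in> set ys" using Cons.prems(2) by (metis list.set_intros(1) set_mset_mset)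
  then obtain ys1 ys2 where ys: "ys = ys1 @ x # ys2" by (meson split_list)
  have "fm_shift_prod X ys = fm_mult (fm_shift_prod X ys1) (fm_shift_prod X (x # ys2))"
    using Cons.prems(1) ys by (simp add: fm_shift_prod_append)
  also have "\<dots> = fm_mult (fm_mult (fm_shift_prod X ys1) (fm_shift X x)) (fm_shift_prod X ys2)"
    by (simp add: fm_mult_assoc)
  also have "\<dots> = fm_mult (fm_shift X x) (fm_shift_prod X (ys1 @ ys2))"
    by (simp only: fm_shift_shift_prod_commute[OF Cons.prems(1), symmetric] fm_mult_assoc
        fm_shift_prod_append[OF Cons.prems(1)])
  also have "\<dots> = fm_shift_prod X (x # xs)"
    using Cons.IH[OF Cons.prems(1), of "ys1 @ ys2"] Cons.prems(2) ys by simp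
  finally show ?case by simp
qed

lemma fm_shift_prod_eigen:
  assumes "fm_supported X" "fm_supported Y" "fm_mult X Y = (\<lambda>i j. e * Y i j)"
  shows "fm_mult (fm_shift_prod X cs) Y = (\<lambda>i j. (\<Prod>c\<leftarrow>cs. e - c) * Y i j)"
proof (induction cs)
  case Nil
  then show ?case using assms by (simp add: fm_mult_one_left)
next
  case (Cons c cs)
  have "fm_mult (fm_shift_prod X (c # cs)) Y
      = fm_mult (fm_shift X c) (\<lambda>i j. (\<Prod>c\<leftarrow>cs. e - c) * Y i j)"
    using Cons by (simp add: fm_mult_assoc)
  also have "\<dots> = (\<lambda>i j. (\<Prod>c\<leftarrow>cs. e - c) * fm_mult (fm_shift X c) Y i j)"
    by (rule fm_mult_scale_right)
  also have "\<dots> = (\<lambda>i j. (\<Prod>c\<leftarrow>c # cs. e - c) * Y i j)"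
    using assms by (simp add: fm_mult_shift_left fun_eq_iff algebra_simps)
  finally show ?case .
qed

lemma fm_shift_prod_annihilator_eigen:
  assumes "fm_supported X" "fm_shift_prod X (c # cs) = (\<lambda>_ _. 0)"
  shows "fm_mult X (fm_shift_prod X cs) = (\<lambda>i j. c * fm_shift_prod X cs i j)"
  using assms fun_cong[OF fun_cong[OF assms(2)]] by (simp add: fm_mult_shift_left fun_eq_iff)

lemma fm_square_minus_one_eq:
  assumes "fm_supported X" "r \<noteq> s"
  shows "fm_mult X X i j - fm_one i j
    = (fm_shift_prod X [s, 1, -1] i j - fm_shift_prod X [r, 1, -1] i j) / (r - s)"
proof -
  define M where "M = fm_shift_prod X [1, -1]"
  have M: "M i j = fm_mult X X i j - fm_one i j"
    unfolding M_def
    by (simp only: fm_shift_prod.simps fm_mult_one_right[OF fm_supported_shift[OF assms(1)]]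
        fm_mult_shift_left[OF fm_supported_shift[OF assms(1)]] fm_mult_shift_right[OF assms(1)])
      (simp add: fm_shift_def algebra_simps)
  have "fm_shift_prod X [s, 1, -1] i j - fm_shift_prod X [r, 1, -1] i j = (r - s) * M i j"
    by (simp add: M_def fm_mult_shift_left algebra_simps)
  then show ?thesis using assms(2) by (simp add: M)
qed

lemma fm_trace_mult_commute: "fm_trace (fm_mult X Y) = fm_trace (fm_mult Y X)"
proof -
  have "fm_trace (fm_mult X Y) = (\<Sum>i<n. \<Sum>k<n. X i k * Y k i)" by (simp add: fm_trace_def fm_mult_def)
  also have "\<dots> = (\<Sum>k<n. \<Sum>i<n. Y k i * X i k)" by (subst sum.swap) (simp add: mult.commute)
  also have "\<dots> = fm_trace (fm_mult Y X)" by (simp add: fm_trace_def fm_mult_def)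
  finally show ?thesis .
qed

lemma fm_mult_vec_mult: "i < n \<Longrightarrow> fm_mult_vec (fm_mult X Y) y i = fm_mult_vec X (fm_mult_vec Y y) i"
proof -
  assume i: "i < n"
  have "fm_mult_vec (fm_mult X Y) y i = (\<Sum>k<n. \<Sum>l<n. X i l * Y l k * y k)"
    using i by (simp add: fm_mult_vec_def fm_mult_def sum_distrib_right)
  also have "\<dots> = (\<Sum>l<n. \<Sum>k<n. X i l * Y l k * y k)" by (rule sum.swap)
  also have "\<dots> = fm_mult_vec X (fm_mult_vec Y y) i"
    by (simp add: fm_mult_vec_def sum_distrib_left mult.assoc)
  finally show ?thesis .
qed

lemma fm_mult_vec_combination:
  "fm_mult_vec (\<lambda>i j. X i j + a * Y i j + b * Z i j) y i
     = fm_mult_vec X y i + a * fm_mult_vec Y y i + b * fm_mult_vec Z y i"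
  by (simp add: fm_mult_vec_def sum.distrib sum_distrib_left algebra_simps)

lemma fm_mult_vec_scale_matrix: "fm_mult_vec (\<lambda>i j. a * Y i j) y i = a * fm_mult_vec Y y i"
  by (simp add: fm_mult_vec_def sum_distrib_left algebra_simps)

lemma fm_mult_vec_scale_vector: "fm_mult_vec X (\<lambda>k. c * y k) i = c * fm_mult_vec X y i"
  by (simp add: fm_mult_vec_def sum_distrib_left algebra_simps)

lemma fm_mult_vec_one: "i < n \<Longrightarrow> fm_mult_vec fm_one y i = y i"
proof -
  assume i: "i < n"
  have "fm_mult_vec fm_one y i = (\<Sum>k<n. if k = i then y i else 0)"
    unfolding fm_mult_vec_def by (rule sum.cong) (auto simp: fm_one_def)
  then show ?thesis using i by simp
qed

lemma fm_mult_vec_cong: "(\<And>k. k < n \<Longrightarrow> y k = z k) \<Longrightarrow> fm_mult_vec X y i = fm_mult_vec X z i"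
  by (simp add: fm_mult_vec_def)

lemma fm_quad_combination:
  "fm_quad (\<lambda>i j. X i j + a * Y i j + b * Z i j) w = fm_quad X w + a * fm_quad Y w + b * fm_quad Z w"
  by (simp add: fm_quad_def sum.distrib sum_distrib_left algebra_simps)

lemma fm_quad_one: "fm_quad fm_one w = (\<Sum>k<n. (w k)\<^sup>2)"
  unfolding fm_quad_def
proof (rule sum.cong [OF refl])
  fix k assume k: "k \<in> {..<n}"
  have "(\<Sum>l<n. w k * fm_one k l * w l) = (\<Sum>l<n. if l = k then w k * w k else 0)"
    by (rule sum.cong) (auto simp: fm_one_def)
  then show "(\<Sum>l<n. w k * fm_one k l * w l) = (w k)\<^sup>2" using k by (simp add: power2_eq_square)
qed

section \<open>Similar and triangular matrices\<close>

definition fm_similar :: "fmat \<Rightarrow> fmat \<Rightarrow> bool" where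
  "fm_similar A B \<longleftrightarrow> (\<exists>P Q. fm_supported P \<and> fm_supported Q \<and> fm_mult P Q = fm_one \<and>
     fm_mult Q P = fm_one \<and> A = fm_mult (fm_mult P B) Q)"

lemma fm_shift_prod_similar:
  assumes "fm_supported P" "fm_supported Q" "fm_mult P Q = fm_one" "fm_mult Q P = fm_one"
    and A: "A = fm_mult (fm_mult P B) Q"
  shows "fm_shift_prod A cs = fm_mult (fm_mult P (fm_shift_prod B cs)) Q"
proof (induction cs)
  case Nil
  then show ?case using assms by (simp add: fm_mult_assoc fm_mult_one_left)
next
  case (Cons c cs)
  have "fm_mult (fm_mult P (fm_shift B c)) Q = fm_mult (\<lambda>i j. fm_mult P B i j - c * P i j) Q"
    using assms by (simp add: fm_mult_shift_right)
  also have "\<dots> = fm_shift A c"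
    using assms by (simp add: fm_mult_diff_left fm_mult_scale_left fm_shift_def)
  finally have shift: "fm_shift A c = fm_mult (fm_mult P (fm_shift B c)) Q" ..
  have cancel: "fm_mult Q (fm_mult P Z) = Z" if "fm_supported Z" for Z
    using assms that by (simp add: fm_mult_assoc [symmetric] fm_mult_one_left)
  show ?case
    using Cons by (simp add: shift fm_mult_assoc cancel)
qed

lemma fm_trace_similar_shift_prod:
  assumes "fm_similar A B"
  shows "fm_trace (fm_shift_prod A cs) = fm_trace (fm_shift_prod B cs)"
proof -
  obtain P Q where PQ: "fm_supported P" "fm_supported Q" "fm_mult P Q = fm_one" "fm_mult Q P = fm_one"
    and A: "A = fm_mult (fm_mult P B) Q"
    using assms by (auto simp: fm_similar_def)
  have "fm_trace (fm_shift_prod A cs) = fm_trace (fm_mult (fm_mult P (fm_shift_prod B cs)) Q)"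
    by (simp add: fm_shift_prod_similar[OF PQ A])
  also have "\<dots> = fm_trace (fm_mult Q (fm_mult P (fm_shift_prod B cs)))"
    by (rule fm_trace_mult_commute)
  also have "\<dots> = fm_trace (fm_shift_prod B cs)"
    using PQ by (simp add: fm_mult_assoc [symmetric] fm_mult_one_left)
  finally show ?thesis .
qed

lemma fm_upper_mult: assumes "fm_upper X" "fm_upper Y" shows "fm_upper (fm_mult X Y)"
proof -
  have "X i k * Y k j = 0" if "j < i" for i j k
    using assms that by (cases "k < i") (auto simp: fm_upper_def)
  then show ?thesis by (simp add: fm_upper_def fm_mult_def)
qed

lemma fm_upper_mult_diag:
  assumes "fm_upper X" "fm_upper Y" "i < n"
  shows "fm_mult X Y i i = X i i * Y i i"
proof -
  have "(\<Sum>k<n. X i k * Y k i) = (\<Sum>k<n. if k = i then X i i * Y i i else 0)"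
  proof (rule sum.cong)
    show "X i k * Y k i = (if k = i then X i i * Y i i else 0)" for k
      using assms by (cases "k < i"; cases "k = i") (auto simp: fm_upper_def)
  qed simp
  then show ?thesis using assms by (simp add: fm_mult_def)
qed

lemma fm_upper_shift_prod:
  assumes "fm_upper X"
  shows "fm_upper (fm_shift_prod X cs) \<and> (\<forall>i<n. fm_shift_prod X cs i i = (\<Prod>c\<leftarrow>cs. X i i - c))"
proof (induction cs)
  case Nil
  then show ?case by (simp add: fm_one_def fm_upper_def)
next
  case (Cons c cs)
  have "fm_upper (fm_shift X c)"
    using assms by (simp add: fm_upper_def fm_shift_def fm_one_def)
  with Cons show ?case
    by (simp add: fm_upper_mult fm_upper_mult_diag fm_shift_def fm_one_def)
qed

text \<open>Cayley-Hamilton for triangular matrices: after multiplying the first k factors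
B - B_ii, the first k columns vanish.\<close>

lemma fm_upper_shift_prod_diag_columns:
  assumes B: "fm_supported B" "fm_upper B" and "k \<le> n" "j < k"
  shows "fm_shift_prod B (map (\<lambda>i. B i i) [0..<k]) i j = 0"
  using assms(3,4)
proof (induction k arbitrary: i j)
  case 0
  then show ?case by simp
next
  case (Suc k)
  let ?N = "fm_shift_prod B (map (\<lambda>i. B i i) [0..<k])"
  have "?N i l * fm_shift B (B k k) l j = 0" for l
  proof (cases "l < k")
    case False
    then have "l = j \<and> l = k \<or> j < l" using Suc.prems by auto
    then show ?thesis
      using B by (auto simp: fm_shift_def fm_one_def fm_supported_def fm_upper_def)
  qed (use Suc in simp)
  moreover have "fm_shift_prod B (map (\<lambda>i. B i i) [0..<Suc k]) = fm_mult ?N (fm_shift B (B k k))"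
    using B by (simp add: fm_shift_prod_append fm_mult_one_right)
  ultimately show ?case by (simp add: fm_mult_def)
qed

lemma fm_upper_cayley_hamilton:
  assumes "fm_supported B" "fm_upper B"
  shows "fm_shift_prod B (map (\<lambda>i. B i i) [0..<n]) = (\<lambda>_ _. 0)"
proof (intro ext)
  fix i j
  show "fm_shift_prod B (map (\<lambda>i. B i i) [0..<n]) i j = 0"
    using fm_upper_shift_prod_diag_columns[OF assms order.refl, of j i]
      fm_supported_shift_prod[of B "map (\<lambda>i. B i i) [0..<n]"]
    by (cases "j < n") (auto simp: fm_supported_def)
qed

lemma fm_similar_upper_cayley_hamilton:
  assumes "fm_similar A B" "fm_supported B" "fm_upper B"
  shows "fm_shift_prod A (map (\<lambda>i. B i i) [0..<n]) = (\<lambda>_ _. 0)"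
  using assms fm_shift_prod_similar
  by (auto simp: fm_similar_def fm_upper_cayley_hamilton)

lemma fm_similar_upper_trace:
  assumes "fm_similar A B" "fm_upper B"
  shows "fm_trace (fm_shift_prod A cs) = (\<Sum>e\<leftarrow>map (\<lambda>i. B i i) [0..<n]. \<Prod>c\<leftarrow>cs. e - c)"
proof -
  have "fm_trace (fm_shift_prod A cs) = fm_trace (fm_shift_prod B cs)"
    by (rule fm_trace_similar_shift_prod[OF assms(1)])
  also have "\<dots> = (\<Sum>i<n. \<Prod>c\<leftarrow>cs. B i i - c)"
    using fm_upper_shift_prod[OF assms(2), of cs] by (simp add: fm_trace_def)
  finally show ?thesis by (simp add: interv_sum_list_conv_sum_set_nat atLeast0LessThan)
qed

section \<open>Symmetric matrices and orthogonal projections\<close>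

lemma fm_sym_mult_commute:
  assumes "fm_sym X" "fm_sym Y" "fm_mult X Y = fm_mult Y X"
  shows "fm_sym (fm_mult X Y)"
proof -
  have "fm_mult X Y i j = fm_mult Y X j i" for i j
    using assms(1,2) by (auto simp: fm_mult_def fm_sym_def mult.commute)
  then show ?thesis using assms(3) by (simp add: fm_sym_def)
qed

lemma fm_sym_shift_prod:
  assumes "fm_sym X" "fm_supported X"
  shows "fm_sym (fm_shift_prod X cs)"
proof (induction cs)
  case Nil
  then show ?case by (auto simp: fm_sym_def fm_one_def)
next
  case (Cons c cs)
  have "fm_sym (fm_shift X c)" using assms(1) by (auto simp: fm_sym_def fm_shift_def fm_one_def)
  with Cons show ?case
    using assms(2) by (simp add: fm_sym_mult_commute fm_shift_shift_prod_commute)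
qed

text \<open>For symmetric S the entries of (S X)^T (S X) are those of X^T S^2 X.\<close>

lemma fm_sym_square_annihilates:
  assumes S: "fm_sym S" and X: "fm_supported X" and SSX: "fm_mult S (fm_mult S X) = (\<lambda>_ _. 0)"
  shows "fm_mult S X = (\<lambda>_ _. 0)"
proof -
  let ?W = "fm_mult S X"
  have "?W i j = 0" if ij: "i < n" "j < n" for i j
  proof -
    have "(\<Sum>i<n. ?W i j * ?W i j) = (\<Sum>i<n. \<Sum>k<n. X k j * (S i k * ?W i j))"
      using ij by (simp add: fm_mult_def sum_distrib_right mult_ac)
    also have "\<dots> = (\<Sum>k<n. X k j * (\<Sum>i<n. S k i * ?W i j))"
      using S by (subst sum.swap) (simp add: sum_distrib_left fm_sym_def)
    also have "\<dots> = (\<Sum>k<n. X k j * fm_mult S ?W k j)"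
      using ij by (simp add: fm_mult_def)
    also have "\<dots> = 0" using SSX by simp
    finally have "(\<Sum>i<n. ?W i j * ?W i j) = 0" .
    then show ?thesis using ij by (subst (asm) sum_nonneg_eq_0_iff) auto
  qed
  then show ?thesis by (auto simp: fun_eq_iff fm_mult_def)
qed

lemma fm_sym_power_annihilates:
  assumes A: "fm_sym A" "fm_supported A" and X: "fm_supported X"
    and h: "fm_mult (fm_shift_prod A (replicate m c)) X = (\<lambda>_ _. 0)"
  shows "fm_mult (fm_shift A c) X = (\<lambda>_ _. 0)"
  using h X
proof (induction m arbitrary: X rule: less_induct)
  case (less m)
  consider "m = 0" | "m = 1" | m' where "m = Suc (Suc m')" by (metis One_nat_def not0_implies_Suc)
  then show ?case
  proof cases
    case 3
    have sym: "fm_sym (fm_shift A c)" using A(1) by (auto simp: fm_sym_def fm_shift_def fm_one_def)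
    have "fm_mult (fm_shift A c) (fm_mult (fm_shift A c) (fm_mult (fm_shift_prod A (replicate m' c)) X))
        = (\<lambda>_ _. 0)"
      using less.prems 3 by (simp add: fm_mult_assoc)
    then have "fm_mult (fm_shift_prod A (replicate (Suc m') c)) X = (\<lambda>_ _. 0)"
      using fm_sym_square_annihilates[OF sym] less.prems(2) by (simp add: fm_mult_assoc)
    then show ?thesis using less 3 by blast
  qed (use less.prems A in \<open>simp_all add: fm_mult_one_left fm_mult_one_right\<close>)
qed

lemma fm_sym_annihilator_squarefree:
  assumes A: "fm_supported A" "fm_sym A"
    and ann: "fm_shift_prod A ([r, s] @ replicate a 1 @ replicate b (-1)) = (\<lambda>_ _. 0)"
  shows "fm_shift_prod A [r, s, 1, -1] = (\<lambda>_ _. 0)"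
proof -
  let ?L = "fm_shift_prod A [r, s]"
    and ?Ra = "fm_shift_prod A (replicate a 1)" and ?Rb = "fm_shift_prod A (replicate b (-1))"
  have "fm_shift_prod A ([r, s] @ replicate a 1 @ replicate b (-1))
      = fm_mult (fm_shift_prod A (replicate a 1 @ replicate b (-1))) ?L"
    using A by (metis append_Cons append_Nil fm_shift_prod_append fm_shift_prod_commute)
  also have "\<dots> = fm_mult ?Ra (fm_mult ?Rb ?L)"
    using A by (simp add: fm_shift_prod_append fm_mult_assoc)
  finally have "fm_shift_prod A ([r, s] @ replicate a 1 @ replicate b (-1))
      = fm_mult ?Ra (fm_mult ?Rb ?L)" .
  then have "fm_mult (fm_shift A 1) (fm_mult ?Rb ?L) = (\<lambda>_ _. 0)"
    using ann fm_sym_power_annihilates[OF A(2,1)] by simp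
  then have "fm_mult ?Rb (fm_mult (fm_shift A 1) ?L) = (\<lambda>_ _. 0)"
    using A by (simp add: fm_mult_assoc [symmetric] fm_shift_shift_prod_commute)
  then have "fm_shift_prod A [-1, 1, r, s] = (\<lambda>_ _. 0)"
    using fm_sym_power_annihilates[OF A(2,1)] by (simp add: fm_mult_assoc)
  then show ?thesis using fm_shift_prod_perm[OF A(1), of "[-1, 1, r, s]" "[r, s, 1, -1]"] by simp
qed

lemma fm_quad_square:
  assumes "fm_sym X"
  shows "(\<Sum>i<n. (fm_mult_vec X w i)\<^sup>2) = fm_quad (fm_mult X X) w"
proof -
  have "(\<Sum>i<n. (fm_mult_vec X w i)\<^sup>2) = (\<Sum>i<n. \<Sum>k<n. \<Sum>l<n. w k * (X i k * X i l) * w l)"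
    by (simp add: fm_mult_vec_def power2_eq_square sum_product mult_ac)
  also have "\<dots> = (\<Sum>k<n. \<Sum>l<n. \<Sum>i<n. w k * (X i k * X i l) * w l)"
    by (subst sum.swap) (rule sum.cong[OF refl], rule sum.swap)
  also have "\<dots> = (\<Sum>k<n. \<Sum>l<n. w k * (\<Sum>i<n. X i k * X i l) * w l)"
    by (simp add: sum_distrib_left sum_distrib_right mult_ac)
  also have "\<dots> = (\<Sum>k<n. \<Sum>l<n. w k * (\<Sum>i<n. X k i * X i l) * w l)"
  proof -
    have "(\<Sum>i<n. X i k * X i l) = (\<Sum>i<n. X k i * X i l)" for k l
      by (intro sum.cong refl) (metis assms fm_symD)
    then show ?thesis by simp
  qed
  also have "\<dots> = fm_quad (fm_mult X X) w" by (simp add: fm_quad_def fm_mult_def)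
  finally show ?thesis .
qed

lemma fm_sym_eigen_right:
  assumes "fm_sym A" "fm_sym Q" "fm_mult A Q = (\<lambda>i j. s * Q i j)"
  shows "fm_mult Q A = (\<lambda>i j. s * Q i j)"
proof -
  have "fm_mult Q A i j = s * Q i j" for i j
  proof -
    have "fm_mult Q A i j = fm_mult A Q j i"
      unfolding fm_mult_def by (auto intro!: sum.cong) (metis assms(1,2) fm_symD mult.commute)
    also have "\<dots> = s * Q i j" using assms(2,3) by (simp add: fm_symD)
    finally show ?thesis .
  qed
  then show ?thesis by blast
qed

lemma fm_sym_idem_column_sum:
  assumes "fm_sym X" "fm_mult X X = X" "i < n" "j < n"
  shows "X i j = (\<Sum>k<n. X k i * X k j)"
proof -
  have "X i j = fm_mult X X i j" using assms(2) by simp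
  also have "\<dots> = (\<Sum>k<n. X k i * X k j)"
    using assms(3,4) unfolding fm_mult_def
    by (simp, intro sum.cong refl) (metis assms(1) fm_symD)
  finally show ?thesis .
qed

lemma fm_sym_idem_psd2:
  assumes "fm_sym X" "fm_mult X X = X" "u < n" "v < n"
  shows "0 \<le> \<alpha>\<^sup>2 * X u u + 2 * \<alpha> * \<beta> * X u v + \<beta>\<^sup>2 * X v v"
proof -
  have "0 \<le> (\<Sum>k<n. (\<alpha> * X k u + \<beta> * X k v)\<^sup>2)" by (intro sum_nonneg) simp
  also have "\<dots> = \<alpha>\<^sup>2 * (\<Sum>k<n. X k u * X k u)
      + 2 * \<alpha> * \<beta> * (\<Sum>k<n. X k u * X k v) + \<beta>\<^sup>2 * (\<Sum>k<n. X k v * X k v)"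
    by (simp add: power2_eq_square algebra_simps sum.distrib sum_distrib_left)
  also have "\<dots> = \<alpha>\<^sup>2 * X u u + 2 * \<alpha> * \<beta> * X u v + \<beta>\<^sup>2 * X v v"
    by (simp add: fm_sym_idem_column_sum[OF assms(1,2) assms(3) assms(3)]
        fm_sym_idem_column_sum[OF assms] fm_sym_idem_column_sum[OF assms(1,2) assms(4) assms(4)])
  finally show ?thesis .
qed

lemma fm_sym_idem_diag_nonneg:
  assumes "fm_sym X" "fm_mult X X = X" "i < n"
  shows "X i i \<ge> 0"
  using fm_sym_idem_psd2[OF assms assms(3), of 1 0] by simp

lemma fm_sym_idem_diag_zero:
  assumes "fm_sym X" "fm_mult X X = X" "fm_supported X" "X j j = 0"
  shows "X k j = 0"
proof (cases "j < n \<and> k < n")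
  case True
  then have "(\<Sum>l<n. (X l j)\<^sup>2) = 0"
    using assms fm_sym_idem_column_sum[OF assms(1,2), of j j] by (simp add: power2_eq_square)
  then show ?thesis using True by (subst (asm) sum_nonneg_eq_0_iff) auto
qed (use assms(3) in \<open>auto simp: fm_supported_def\<close>)

text \<open>Equality case of Bessel's inequality.\<close>

lemma fm_sym_idem_fixed:
  assumes Q: "fm_sym Q" "fm_mult Q Q = Q" and long: "(\<Sum>i<n. (w i)\<^sup>2) \<le> fm_quad Q w"
    and i: "i < n"
  shows "fm_mult_vec Q w i = w i"
proof -
  define u where "u = fm_mult_vec Q w"
  have uu: "(\<Sum>i<n. (u i)\<^sup>2) = fm_quad Q w" using fm_quad_square[OF Q(1), of w] Q(2) by (simp add: u_def)
  have wu: "(\<Sum>i<n. w i * u i) = fm_quad Q w"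
    by (simp add: u_def fm_mult_vec_def fm_quad_def sum_distrib_left mult_ac)
  have "(\<Sum>i<n. (w i - u i)\<^sup>2) = (\<Sum>i<n. (w i)\<^sup>2) - 2 * (\<Sum>i<n. w i * u i) + (\<Sum>i<n. (u i)\<^sup>2)"
    by (simp add: power2_eq_square algebra_simps sum.distrib sum_subtractf sum_distrib_left)
  also have "\<dots> \<le> 0" using long wu uu by simp
  finally have "(\<Sum>i<n. (w i - u i)\<^sup>2) = 0" by (simp add: antisym sum_nonneg)
  then show ?thesis using i by (subst (asm) sum_nonneg_eq_0_iff) (auto simp: u_def)
qed

text \<open>If y \<noteq> 0 is fixed by the projection X then X_ii \<ge> y_i^2 / |y|^2 (Cauchy-Schwarz for the
i-th column of X), so the diagonal of X has mass at least 1 on the support of y.\<close>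

lemma fm_sym_idem_fixed_trace_ge_1:
  assumes X: "fm_sym X" "fm_mult X X = X"
    and S: "S \<subseteq> {..<n}" and supp: "\<And>i. i \<notin> S \<Longrightarrow> y i = 0" and "i0 \<in> S" "y i0 \<noteq> 0"
    and fixed: "\<And>i. i < n \<Longrightarrow> fm_mult_vec X y i = y i"
  shows "(\<Sum>i\<in>S. X i i) \<ge> 1"
proof -
  define N where "N = (\<Sum>k<n. (y k)\<^sup>2)"
  have N: "N > 0" unfolding N_def by (rule sum_pos2[of _ i0]) (use assms in auto)
  have "X i i \<ge> (y i)\<^sup>2 / N" if i: "i < n" for i
  proof -
    define c where "c = y i / N"
    have col: "(\<Sum>k<n. X k i * y k) = fm_mult_vec X y i"
      unfolding fm_mult_vec_def using X(1) by (intro sum.cong refl) (simp add: fm_symD)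
    have "0 \<le> (\<Sum>k<n. (X k i - c * y k)\<^sup>2)" by (rule sum_nonneg) simp
    also have "\<dots> = (\<Sum>k<n. X k i * X k i) - 2 * c * (\<Sum>k<n. X k i * y k) + c\<^sup>2 * N"
      by (simp add: power2_eq_square algebra_simps sum.distrib sum_subtractf sum_distrib_left N_def)
    also have "\<dots> = X i i - (y i)\<^sup>2 / N"
      using fixed[OF i] fm_sym_idem_column_sum[OF X i i] N col
      by (simp add: c_def power2_eq_square)
    finally show ?thesis by simp
  qed
  then have "(\<Sum>i\<in>S. (y i)\<^sup>2 / N) \<le> (\<Sum>i\<in>S. X i i)" using S by (intro sum_mono) auto
  moreover have "(\<Sum>i\<in>S. (y i)\<^sup>2) = N"
    unfolding N_def by (rule sum.mono_neutral_left) (use S supp in auto)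
  ultimately show ?thesis using N by (simp add: sum_divide_distrib [symmetric])
qed

lemma fm_nonneg_abs_eigen:
  assumes nonneg: "\<And>i k. A i k \<ge> 0" and eigen: "\<And>i. i < n \<Longrightarrow> fm_mult_vec A y i = s * y i"
  shows "s\<^sup>2 * (\<Sum>i<n. \<bar>y i\<bar>\<^sup>2) \<le> (\<Sum>i<n. (fm_mult_vec A (\<lambda>k. \<bar>y k\<bar>) i)\<^sup>2)"
proof -
  have "\<bar>s\<bar> * \<bar>y i\<bar> \<le> fm_mult_vec A (\<lambda>k. \<bar>y k\<bar>) i" if "i < n" for i
  proof -
    have "\<bar>s\<bar> * \<bar>y i\<bar> = \<bar>\<Sum>k<n. A i k * y k\<bar>"
      using eigen[OF that] by (simp add: fm_mult_vec_def abs_mult)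
    also have "\<dots> \<le> (\<Sum>k<n. \<bar>A i k * y k\<bar>)" by (rule sum_abs)
    also have "\<dots> = fm_mult_vec A (\<lambda>k. \<bar>y k\<bar>) i"
      using nonneg by (simp add: fm_mult_vec_def abs_mult)
    finally show ?thesis .
  qed
  then have "(\<Sum>i<n. (\<bar>s\<bar> * \<bar>y i\<bar>)\<^sup>2) \<le> (\<Sum>i<n. (fm_mult_vec A (\<lambda>k. \<bar>y k\<bar>) i)\<^sup>2)"
    by (intro sum_mono power_mono) auto
  then show ?thesis by (simp add: sum_distrib_left power_mult_distrib)
qed

end

section \<open>Spectral decomposition\<close>

locale two_eigen_decomp =
  fixes n :: nat and A :: fmat and r s :: real and P Q :: fmat
  assumes r_gt_1: "r > 1" and s_lt_minus_1: "s < -1"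
    and supported_P: "fm_supported n P" and supported_Q: "fm_supported n Q"
    and sym_P: "fm_sym P" and sym_Q: "fm_sym Q"
    and eigen_P: "fm_mult n A P = (\<lambda>i j. r * P i j)"
    and eigen_Q: "fm_mult n A Q = (\<lambda>i j. s * Q i j)"
    and idem_P: "fm_mult n P P = P" and idem_Q: "fm_mult n Q Q = Q"
    and orth_PQ: "fm_mult n P Q = (\<lambda>_ _. 0)"
    and square_decomp: "fm_mult n A A = (\<lambda>i j. fm_one n i j + (r\<^sup>2 - 1) * P i j + (s\<^sup>2 - 1) * Q i j)"
    and trace_P: "fm_trace n P = 1"

lemma square_minus_one_pos: "1 < \<bar>x :: real\<bar> \<Longrightarrow> x\<^sup>2 - 1 > 0"
  using one_less_power[of "\<bar>x\<bar>" 2] by simp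

lemma two_eigen_decomp_exists:
  assumes A: "fm_supported n A" "fm_sym A" and r: "r > 1" and s: "s < -1"
    and ann: "fm_shift_prod n A [r, s, 1, -1] = (\<lambda>_ _. 0)"
    and trace: "fm_trace n (fm_shift_prod n A [s, 1, -1]) = (r - s) * (r - 1) * (r + 1)"
  obtains P Q where "two_eigen_decomp n A r s P Q"
proof -
  \<comment> \<open>Lagrange interpolation: Y and Z are the eigenprojections for r and s up to the scalars cY, cZ.\<close>
  define Y where "Y = fm_shift_prod n A [s, 1, -1]"
  define Z where "Z = fm_shift_prod n A [r, 1, -1]"
  define cY where "cY = (r - s) * (r\<^sup>2 - 1)"
  define cZ where "cZ = - ((r - s) * (s\<^sup>2 - 1))"
  have sq: "r\<^sup>2 - 1 > 0" "s\<^sup>2 - 1 > 0"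
    using square_minus_one_pos[of r] square_minus_one_pos[of s] r s by (simp_all add: abs_if)
  then have cY: "cY > 0" and cZ: "cZ \<noteq> 0" using r s by (simp_all add: cY_def cZ_def)
  have supp: "fm_supported n Y" "fm_supported n Z" by (simp_all add: Y_def Z_def)
  have eY: "fm_mult n A Y = (\<lambda>i j. r * Y i j)"
    using fm_shift_prod_annihilator_eigen[OF A(1) ann] by (simp add: Y_def)
  have eZ: "fm_mult n A Z = (\<lambda>i j. s * Z i j)"
    using fm_shift_prod_annihilator_eigen[OF A(1), of s "[r, 1, -1]"] ann
      fm_shift_prod_perm[OF A(1), of "[s, r, 1, -1]" "[r, s, 1, -1]"] by (simp add: Z_def)
  have YY: "fm_mult n Y Y = (\<lambda>i j. cY * Y i j)"
    using fm_shift_prod_eigen[OF A(1) supp(1) eY, of "[s, 1, -1]"]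
    by (simp add: Y_def cY_def power2_eq_square algebra_simps)
  have ZZ: "fm_mult n Z Z = (\<lambda>i j. cZ * Z i j)"
    using fm_shift_prod_eigen[OF A(1) supp(2) eZ, of "[r, 1, -1]"]
    by (simp add: Z_def cZ_def power2_eq_square algebra_simps)
  have YZ: "fm_mult n Y Z = (\<lambda>_ _. 0)"
    using fm_shift_prod_eigen[OF A(1) supp(2) eZ, of "[s, 1, -1]"] by (simp add: Y_def)
  define P where "P = (\<lambda>i j. Y i j / cY)"
  define Q where "Q = (\<lambda>i j. Z i j / cZ)"
  have "two_eigen_decomp n A r s P Q"
  proof
    show "r > 1" "s < -1" using r s .
    show "fm_supported n P" "fm_supported n Q" using supp by (auto simp: P_def Q_def fm_supported_def)
    have "fm_sym Y" "fm_sym Z" unfolding Y_def Z_def by (rule fm_sym_shift_prod[OF A(2,1)])+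
    then show "fm_sym P" "fm_sym Q" by (auto simp: P_def Q_def fm_sym_def)
    show "fm_mult n A P = (\<lambda>i j. r * P i j)" "fm_mult n A Q = (\<lambda>i j. s * Q i j)"
      using fm_mult_scale_right[of n A "1 / cY" Y] fm_mult_scale_right[of n A "1 / cZ" Z]
      by (simp_all add: P_def Q_def eY eZ)
    show "fm_mult n P P = P" "fm_mult n Q Q = Q" "fm_mult n P Q = (\<lambda>_ _. 0)"
      using cY cZ unfolding P_def Q_def divide_inverse mult.commute[of _ "inverse _"]
      by (simp_all add: fm_mult_scale_left fm_mult_scale_right YY ZZ YZ fun_eq_iff)
    have "fm_trace n Y = cY" unfolding Y_def trace cY_def by (simp add: power2_eq_square algebra_simps)
    then show "fm_trace n P = 1" using cY by (simp add: P_def fm_trace_def sum_divide_distrib [symmetric])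
    have "r - s > 0" using r s by simp
    then have ratios: "(r\<^sup>2 - 1) / cY = 1 / (r - s)" "(s\<^sup>2 - 1) / cZ = - (1 / (r - s))"
      using sq unfolding cY_def cZ_def divide_minus_right
      by (simp_all only: nonzero_divide_mult_cancel_right less_numeral_extra(3) order_less_imp_not_eq2
          not_False_eq_True)
    have "(r\<^sup>2 - 1) * P i j + (s\<^sup>2 - 1) * Q i j = fm_mult n A A i j - fm_one n i j" for i j
    proof -
      have "(r\<^sup>2 - 1) * P i j + (s\<^sup>2 - 1) * Q i j = (r\<^sup>2 - 1) / cY * Y i j + (s\<^sup>2 - 1) / cZ * Z i j"
        by (simp add: P_def Q_def)
      also have "\<dots> = (Y i j - Z i j) / (r - s)" unfolding ratios by (simp add: diff_divide_distrib)
      also have "\<dots> = fm_mult n A A i j - fm_one n i j"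
        unfolding Y_def Z_def using \<open>r - s > 0\<close> by (intro fm_square_minus_one_eq[OF A(1), symmetric]) simp
      finally show ?thesis .
    qed
    then show "fm_mult n A A = (\<lambda>i j. fm_one n i j + (r\<^sup>2 - 1) * P i j + (s\<^sup>2 - 1) * Q i j)"
      by (simp add: fun_eq_iff algebra_simps)
  qed
  then show thesis by (rule that)
qed

definition fm_of_mat :: "nat \<Rightarrow> real mat \<Rightarrow> fmat" where
  "fm_of_mat n X = (\<lambda>i j. if i < n \<and> j < n then X $$ (i, j) else 0)"

lemma fm_of_mat_mult:
  assumes "X \<in> carrier_mat n n" "Y \<in> carrier_mat n n"
  shows "fm_of_mat n (X * Y) = fm_mult n (fm_of_mat n X) (fm_of_mat n Y)"
proof (intro ext)
  show "fm_of_mat n (X * Y) i j = fm_mult n (fm_of_mat n X) (fm_of_mat n Y) i j" for i j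
    using assms
    by (auto simp: fm_of_mat_def fm_mult_def scalar_prod_def atLeast0LessThan intro!: sum.cong)
qed

lemma fm_of_mat_one: "fm_of_mat n (1\<^sub>m n) = fm_one n"
  by (auto simp: fm_of_mat_def fm_one_def fun_eq_iff)

lemma fm_supported_fm_of_mat [simp]: "fm_supported n (fm_of_mat n X)"
  by (simp add: fm_supported_def fm_of_mat_def)

definition adj_fm :: "(nat \<Rightarrow> nat \<Rightarrow> bool) \<Rightarrow> fmat" where
  "adj_fm E = (\<lambda>i j. if E i j then 1 else 0)"

lemma fm_sym_adj_fm: "simple_graph n E \<Longrightarrow> fm_sym (adj_fm E)"
  by (auto simp: fm_sym_def adj_fm_def simple_graph_def)

lemma fm_supported_adj_fm: "simple_graph n E \<Longrightarrow> fm_supported n (adj_fm E)"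
  by (auto simp: fm_supported_def adj_fm_def simple_graph_def)

lemma prod_list_two_eigen_factors:
  "(\<Prod>e\<leftarrow>[r, s] @ replicate a 1 @ replicate b (-1). [:-e, 1:])
    = [:-r, 1:] * [:-s, 1:] * [:-1, 1:] ^ a * [:1 :: 'a :: comm_ring_1, 1:] ^ b"
proof -
  have "(\<Prod>e\<leftarrow>[r, s] @ replicate a 1 @ replicate b (-1). [:-e, 1:])
      = [:-r, 1:] * ([:-s, 1:] * 1) * ([:- 1, 1:] ^ a * [:- (-1), 1:] ^ b)"
    by (simp only: map_append prod_list.append list.map prod_list.Cons prod_list.Nil
        map_replicate prod_list_replicate mult.assoc)
  then show ?thesis by (simp only: minus_minus mult_1_right mult.assoc)
qed

lemma adjacency_triangularization:
  assumes G: "simple_graph n E" and cp: "char_poly (adj_matrix n E) = (\<Prod>e\<leftarrow>es. [:-e, 1:])"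
  obtains B where "fm_similar n (adj_fm E) B" "fm_supported n B" "fm_upper B"
    "map (\<lambda>i. B i i) [0..<n] = es"
proof -
  let ?A = "adj_matrix n E"
  have A: "?A \<in> carrier_mat n n" by (simp add: adj_matrix_def)
  obtain Bm Pm Qm where sd: "schur_decomposition ?A es = (Bm, Pm, Qm)"
    by (cases "schur_decomposition ?A es") auto
  from schur_decomposition[OF A cp sd]
  have sim: "similar_mat_wit ?A Bm Pm Qm" and ut: "upper_triangular Bm" and dg: "diag_mat Bm = es"
    by auto
  from sim A have car: "Bm \<in> carrier_mat n n" "Pm \<in> carrier_mat n n" "Qm \<in> carrier_mat n n"
    and PQ: "Pm * Qm = 1\<^sub>m n" and QP: "Qm * Pm = 1\<^sub>m n" and AB: "?A = Pm * Bm * Qm"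
    by (auto simp: similar_mat_wit_def Let_def)
  have "adj_fm E = fm_of_mat n ?A"
    using G by (auto simp: adj_fm_def fm_of_mat_def adj_matrix_def simple_graph_def fun_eq_iff)
  then have "fm_similar n (adj_fm E) (fm_of_mat n Bm)"
    unfolding fm_similar_def AB using car PQ QP
    by (intro exI[of _ "fm_of_mat n Pm"] exI[of _ "fm_of_mat n Qm"])
      (simp add: fm_of_mat_mult [symmetric] fm_of_mat_one)
  moreover have "fm_upper (fm_of_mat n Bm)"
    using ut car by (auto simp: fm_upper_def fm_of_mat_def upper_triangular_def)
  moreover have "map (\<lambda>i. fm_of_mat n Bm i i) [0..<n] = es"
  proof -
    have "map (\<lambda>i. fm_of_mat n Bm i i) [0..<n] = map (\<lambda>i. Bm $$ (i, i)) [0..<n]"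
      by (intro map_cong refl) (simp add: fm_of_mat_def)
    also have "\<dots> = es" using car dg by (simp add: diag_mat_def)
    finally show ?thesis .
  qed
  ultimately show thesis using that by simp
qed

section \<open>Connected components\<close>

lemma simple_graph_sym: "simple_graph n E \<Longrightarrow> E u v \<Longrightarrow> E v u"
  by (simp add: simple_graph_def)

lemma simple_graph_irrefl: "simple_graph n E \<Longrightarrow> \<not> E u u"
  by (simp add: simple_graph_def)

lemma simple_graph_bounded: "simple_graph n E \<Longrightarrow> E u v \<Longrightarrow> u < n \<and> v < n"
  by (simp add: simple_graph_def)

definition component :: "nat \<Rightarrow> (nat \<Rightarrow> nat \<Rightarrow> bool) \<Rightarrow> nat \<Rightarrow> nat set" where
  "component n E x = {w. w < n \<and> reachable E x w}"

lemma components_eq_image: "components n E = component n E ` {0..<n}"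
  by (simp add: components_def component_def)

lemma component_less: "w \<in> component n E x \<Longrightarrow> w < n"
  by (simp add: component_def)

lemma component_self: "x < n \<Longrightarrow> x \<in> component n E x"
  by (simp add: component_def reachable_def)

context
  fixes n :: nat and E :: "nat \<Rightarrow> nat \<Rightarrow> bool"
  assumes G: "simple_graph n E"
begin

lemma reachable_sym: "reachable E x y \<Longrightarrow> reachable E y x"
  unfolding reachable_def
proof (induction rule: rtranclp_induct)
  case (step y z)
  then show ?case using simple_graph_sym[OF G] by (meson converse_rtranclp_into_rtranclp)
qed simp

lemma component_eq: assumes "w \<in> component n E x" shows "component n E w = component n E x"
proof -
  have "reachable E x w" "reachable E w x" using assms reachable_sym by (auto simp: component_def)
  then show ?thesis by (auto simp: component_def reachable_def)
qed

lemma component_edge_iff: "E i k \<Longrightarrow> i \<in> component n E x \<longleftrightarrow> k \<in> component n E x"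
  using simple_graph_bounded[OF G] simple_graph_sym[OF G]
  by (auto simp: component_def reachable_def intro: rtranclp.rtrancl_into_rtrancl)

lemma component_disjoint:
  "component n E x \<noteq> component n E y \<Longrightarrow> component n E x \<inter> component n E y = {}"
  using component_eq by blast

end

section \<open>Graphs with exactly two eigenvalues different from 1 and -1\<close>

lemma adj_fm_square:
  assumes "simple_graph n E" "u < n" "v < n"
  shows "fm_mult n (adj_fm E) (adj_fm E) u v = real (card (neighbors n E u \<inter> neighbors n E v))"
proof -
  have "fm_mult n (adj_fm E) (adj_fm E) u v = (\<Sum>k<n. if E u k \<and> E v k then 1 else 0)"
    using assms by (auto simp: fm_mult_def adj_fm_def intro!: sum.cong dest: simple_graph_sym)
  also have "\<dots> = real (card ({..<n} \<inter> {k. E u k \<and> E v k}))"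
    by (simp add: sum.If_cases)
  also have "{..<n} \<inter> {k. E u k \<and> E v k} = neighbors n E u \<inter> neighbors n E v"
    by (auto simp: neighbors_def)
  finally show ?thesis .
qed

text \<open>The (u, v) entry of A^2 - 1.\<close>

definition codegree_excess :: "nat \<Rightarrow> (nat \<Rightarrow> nat \<Rightarrow> bool) \<Rightarrow> nat \<Rightarrow> nat \<Rightarrow> real" where
  "codegree_excess n E u v = real (card (neighbors n E u \<inter> neighbors n E v)) - (if u = v then 1 else 0)"

lemma degree_eq_codegree_excess: "real (degree n E u) = codegree_excess n E u u + 1"
  by (simp add: degree_def codegree_excess_def)

locale two_eigen_graph = two_eigen_decomp n "adj_fm E" r s P Q for n E r s P Q +
  assumes graph: "simple_graph n E"
begin

abbreviation "A \<equiv> adj_fm E"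

lemma sym_adj: "fm_sym A"
  using graph by (rule fm_sym_adj_fm)

lemma r_sq_gt_1: "r\<^sup>2 - 1 > 0"
  using square_minus_one_pos[of r] r_gt_1 by simp

lemma s_sq_gt_1: "s\<^sup>2 - 1 > 0"
  using square_minus_one_pos[of s] s_lt_minus_1 by (simp add: abs_if)

lemma codegree_excess_decomp:
  assumes "u < n" "v < n"
  shows "codegree_excess n E u v = (r\<^sup>2 - 1) * P u v + (s\<^sup>2 - 1) * Q u v"
  using adj_fm_square[OF graph assms] fun_cong[OF fun_cong[OF square_decomp, of u], of v] assms
  by (simp add: codegree_excess_def fm_one_def)

lemma codegree_excess_psd2:
  assumes "u < n" "v < n"
  shows "0 \<le> \<alpha>\<^sup>2 * codegree_excess n E u u + 2 * \<alpha> * \<beta> * codegree_excess n E u v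
    + \<beta>\<^sup>2 * codegree_excess n E v v"
proof -
  have "\<alpha>\<^sup>2 * codegree_excess n E u u + 2 * \<alpha> * \<beta> * codegree_excess n E u v
      + \<beta>\<^sup>2 * codegree_excess n E v v
    = (r\<^sup>2 - 1) * (\<alpha>\<^sup>2 * P u u + 2 * \<alpha> * \<beta> * P u v + \<beta>\<^sup>2 * P v v)
      + (s\<^sup>2 - 1) * (\<alpha>\<^sup>2 * Q u u + 2 * \<alpha> * \<beta> * Q u v + \<beta>\<^sup>2 * Q v v)"
    using assms by (simp add: codegree_excess_decomp algebra_simps)
  also have "\<dots> \<ge> 0"
    using fm_sym_idem_psd2[OF sym_P idem_P assms] fm_sym_idem_psd2[OF sym_Q idem_Q assms]
      r_sq_gt_1 s_sq_gt_1 by simp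
  finally show ?thesis .
qed

lemma degree_ge_1: "v < n \<Longrightarrow> degree n E v \<ge> 1"
  using codegree_excess_psd2[of v v 1 0] degree_eq_codegree_excess[of n E v] by simp

text \<open>With x = d_u and y = d_v, the principal 2x2 minor of A^2 - 1 at u, v is
(x - 1)(y - 1) - x^2, which is negative whenever 1 < x and y \<le> x + 2; for x = 1 the
form is negative at (-y, 1).\<close>

lemma nested_neighbors_degree_gap:
  assumes u: "u < n" and v: "v < n" and "u \<noteq> v"
    and sub: "neighbors n E u \<subseteq> neighbors n E v"
  shows "int (degree n E v) - int (degree n E u) \<ge> 3"
proof (rule ccontr)
  assume small_gap: "\<not> ?thesis"
  define x where "x = real (degree n E u)"
  define y where "y = real (degree n E v)"
  have yx: "y \<le> x + 2" using small_gap by (simp add: x_def y_def)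
  have "neighbors n E u \<inter> neighbors n E v = neighbors n E u" using sub by blast
  then have ex: "codegree_excess n E u u = x - 1" "codegree_excess n E v v = y - 1"
    "codegree_excess n E u v = x"
    using \<open>u \<noteq> v\<close> by (simp_all add: codegree_excess_def x_def y_def degree_def)
  have x1: "x \<ge> 1" using degree_ge_1[OF u] by (simp add: x_def)
  show False
  proof (cases "x = 1")
    case True
    then show False using codegree_excess_psd2[OF u v, of "-y" 1] ex by (simp add: y_def)
  next
    case False
    then have xp: "x - 1 > 0" using x1 by simp
    have "0 \<le> x\<^sup>2 * (x - 1) + 2 * x * (-(x - 1)) * x + (-(x - 1))\<^sup>2 * (y - 1)"
      using codegree_excess_psd2[OF u v, of x "-(x - 1)"] ex by simp
    then have "0 \<le> (x - 1) * ((x - 1) * (y - 1) - x * x)"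
      by (simp add: power2_eq_square algebra_simps)
    then have "x * x \<le> (x - 1) * (y - 1)" using xp by (simp add: zero_le_mult_iff)
    also have "\<dots> \<le> (x - 1) * (x + 1)" using xp yx by (intro mult_left_mono) auto
    finally show False by (simp add: algebra_simps)
  qed
qed

text \<open>A degree-1 vertex v has codegree excess 0 on the diagonal, so positive semidefiniteness
forces excess 0 between v and every other vertex.\<close>

lemma degree_one_no_common_neighbors:
  assumes v: "v < n" and dv: "degree n E v = 1" and w: "w < n" "w \<noteq> v"
  shows "neighbors n E v \<inter> neighbors n E w = {}"
proof (rule ccontr)
  assume "neighbors n E v \<inter> neighbors n E w \<noteq> {}"
  then have "card (neighbors n E v \<inter> neighbors n E w) \<ge> 1"
    by (simp add: Suc_leI card_gt_0_iff neighbors_def)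
  then have c: "codegree_excess n E v w \<ge> 1" using w by (simp add: codegree_excess_def)
  define e where "e = codegree_excess n E w w"
  have e0: "e \<ge> 0" using codegree_excess_psd2[OF w(1) w(1), of 1 0] by (simp add: e_def)
  have "codegree_excess n E v v = 0" using dv degree_eq_codegree_excess[of n E v] by simp
  then have "0 \<le> e - 2 * (e + 1) * codegree_excess n E v w"
    using codegree_excess_psd2[OF v w(1), of "-(e + 1)" 1] by (simp add: e_def algebra_simps)
  moreover have "e + 1 \<le> (e + 1) * codegree_excess n E v w"
    using mult_left_mono[OF c, of "e + 1"] e0 by simp
  ultimately show False using e0 by linarith
qed

lemma degree_one_component:
  assumes v: "v < n" and dv: "degree n E v = 1"
  obtains u where "E v u" "u \<noteq> v" "neighbors n E v = {u}" "neighbors n E u = {v}"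
    "component n E v = {v, u}"
proof -
  obtain u where nv: "neighbors n E v = {u}"
    using dv unfolding degree_def by (auto simp: card_Suc_eq)
  then have Evu: "E v u" and u: "u < n" by (auto simp: neighbors_def)
  have nu: "neighbors n E u = {v}"
  proof
    show "{v} \<subseteq> neighbors n E u" using simple_graph_sym[OF graph Evu] v by (simp add: neighbors_def)
    show "neighbors n E u \<subseteq> {v}"
    proof
      fix w assume w: "w \<in> neighbors n E u"
      then have "E w u" using simple_graph_sym[OF graph] by (simp add: neighbors_def)
      then have "u \<in> neighbors n E v \<inter> neighbors n E w" using nv u by (simp add: neighbors_def)
      then show "w \<in> {v}" using degree_one_no_common_neighbors[OF v dv] w by (auto simp: neighbors_def)
    qed
  qed
  have "component n E v = {v, u}"
  proof
    show "{v, u} \<subseteq> component n E v"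
      using component_self[OF v] component_edge_iff[OF graph Evu] by auto
    show "component n E v \<subseteq> {v, u}"
    proof
      fix w assume "w \<in> component n E v"
      then have "E\<^sup>*\<^sup>* v w" by (simp add: component_def reachable_def)
      then show "w \<in> {v, u}"
      proof (induction rule: rtranclp_induct)
        case (step y z)
        then have "z \<in> neighbors n E y" using simple_graph_bounded[OF graph] by (simp add: neighbors_def)
        then show ?case using step.IH nv nu by auto
      qed simp
    qed
  qed
  moreover have "u \<noteq> v" using Evu simple_graph_irrefl[OF graph] by blast
  ultimately show thesis using that Evu nv nu by blast
qed

lemma component_K2_or_min_degree_2:
  assumes "x < n" "\<not> (\<forall>w\<in>component n E x. degree n E w \<ge> 2)"
  shows "component_is_K2 E (component n E x)"
proof -
  obtain w where w: "w \<in> component n E x" and "degree n E w < 2" using assms(2) by (auto simp: not_le)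
  moreover have wn: "w < n" using w by (rule component_less)
  ultimately have "degree n E w = 1" using degree_ge_1[OF wn] by simp
  then obtain u where "E w u" "u \<noteq> w" "neighbors n E w = {u}" "neighbors n E u = {w}"
    "component n E w = {w, u}"
    by (rule degree_one_component[OF wn])
  then show ?thesis unfolding component_is_K2_def using component_eq[OF graph w] by metis
qed

text \<open>If all vertices had degree 1 then A^2 = 1, so P = A^2 P = r^2 P would vanish.\<close>

lemma exists_min_degree_2_component: "\<exists>x<n. \<forall>w\<in>component n E x. degree n E w \<ge> 2"
proof (rule ccontr)
  assume none: "\<not> ?thesis"
  have deg1: "degree n E i = 1" if i: "i < n" for i
  proof -
    obtain w where w: "w \<in> component n E i" and "degree n E w < 2" using none i by force
    moreover have wn: "w < n" using w by (rule component_less)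
    ultimately have dw: "degree n E w = 1" using degree_ge_1[OF wn] by simp
    then obtain u where "E w u" "u \<noteq> w" "neighbors n E w = {u}" "neighbors n E u = {w}"
      "component n E w = {w, u}"
      by (rule degree_one_component[OF wn])
    moreover have "i \<in> component n E w" using component_eq[OF graph w] component_self[OF i] by simp
    ultimately show ?thesis using dw by (auto simp: degree_def)
  qed
  have "fm_mult n A A u v = fm_one n u v" for u v
  proof (cases "u < n \<and> v < n")
    case True
    then have "codegree_excess n E u v = 0"
      using deg1 degree_eq_codegree_excess[of n E u] degree_one_no_common_neighbors[of u v]
      by (cases "u = v") (auto simp: codegree_excess_def)
    then show ?thesis using True adj_fm_square[OF graph] by (simp add: codegree_excess_def fm_one_def)
  qed (auto simp: fm_mult_def fm_one_def)
  then have "fm_mult n A A = fm_one n" by (intro ext)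
  then have one: "fm_mult n (fm_mult n A A) P = P" using supported_P by (simp add: fm_mult_one_left)
  have sq: "fm_mult n (fm_mult n A A) P = (\<lambda>i j. r\<^sup>2 * P i j)"
    by (simp add: fm_mult_assoc eigen_P fm_mult_scale_right power2_eq_square mult.assoc)
  have "P i i = r\<^sup>2 * P i i" for i by (rule fun_cong[OF fun_cong[OF trans[OF one[symmetric] sq]]])
  then have "r\<^sup>2 * P i i - P i i = 0" for i by (metis diff_self)
  then have "(r\<^sup>2 - 1) * P i i = 0" for i by (simp add: left_diff_distrib)
  then have "P i i = 0" for i using r_sq_gt_1 by simp
  then show False using trace_P by (simp add: fm_trace_def)
qed

lemma Q_adj: "fm_mult n Q A = (\<lambda>i j. s * Q i j)"
  by (rule fm_sym_eigen_right[OF sym_adj sym_Q eigen_Q])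

lemma component_restriction_eigen:
  fixes x :: nat
  assumes eigen: "\<And>k. k < n \<Longrightarrow> fm_mult_vec n A y k = e * y k" and k: "k < n"
  defines "y' \<equiv> \<lambda>l. if l \<in> component n E x then y l else 0"
  shows "fm_mult_vec n A y' k = e * y' k"
proof (cases "k \<in> component n E x")
  case True
  have terms: "A k l * y' l = A k l * y l" for l
    using component_edge_iff[OF graph, of k l x] True by (simp add: adj_fm_def y'_def)
  have "fm_mult_vec n A y' k = fm_mult_vec n A y k"
    unfolding fm_mult_vec_def by (rule sum.cong[OF refl], rule terms)
  then show ?thesis using eigen[OF k] True by (simp add: y'_def)
next
  case False
  have "A k l * y' l = 0" for l
    using component_edge_iff[OF graph, of k l x] False by (simp add: adj_fm_def y'_def)
  then show ?thesis using False by (simp add: fm_mult_vec_def y'_def)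
qed

text \<open>The restriction y of a column of P to a component is an r-eigenvector of A; as r \<noteq> s
it is killed by Q, so A^2 y = r^2 y forces P y = y.\<close>

lemma component_column_fixed:
  fixes x :: nat
  assumes j: "j < n" and i: "i < n"
  defines "y \<equiv> \<lambda>k. if k \<in> component n E x then P k j else 0"
  shows "fm_mult_vec n P y i = y i"
proof -
  have "fm_mult_vec n A (\<lambda>k. P k j) k = r * P k j" if "k < n" for k
    using fun_cong[OF fun_cong[OF eigen_P, of k], of j] that j by (simp add: fm_mult_def fm_mult_vec_def)
  then have Ay: "fm_mult_vec n A y k = r * y k" if "k < n" for k
    unfolding y_def using that by (rule component_restriction_eigen)
  have AX: "fm_mult_vec n X (fm_mult_vec n A y) i = r * fm_mult_vec n X y i" for X
  proof -
    have "fm_mult_vec n X (fm_mult_vec n A y) i = fm_mult_vec n X (\<lambda>k. r * y k) i"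
      by (rule fm_mult_vec_cong) (rule Ay)
    then show ?thesis by (simp add: fm_mult_vec_scale_vector)
  qed
  have "s * fm_mult_vec n Q y i = r * fm_mult_vec n Q y i"
    using fm_mult_vec_mult[OF i, of Q A y] by (simp add: Q_adj fm_mult_vec_scale_matrix AX)
  then have Qy: "fm_mult_vec n Q y i = 0" using r_gt_1 s_lt_minus_1 by simp
  have "r\<^sup>2 * y i = fm_mult_vec n A (fm_mult_vec n A y) i"
    using Ay[OF i] by (simp add: AX power2_eq_square)
  also have "\<dots> = y i + (r\<^sup>2 - 1) * fm_mult_vec n P y i"
    using fm_mult_vec_mult[OF i, of A A y]
    by (simp add: square_decomp fm_mult_vec_combination fm_mult_vec_one[OF i] Qy)
  finally have "(r\<^sup>2 - 1) * fm_mult_vec n P y i = (r\<^sup>2 - 1) * y i" by (simp add: algebra_simps)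
  then show ?thesis using r_sq_gt_1 by simp
qed

lemma Q_column_off_component:
  assumes x: "x < n" and Px: "\<And>k. P k x = 0" and i: "i \<notin> component n E x"
  shows "Q i x = 0"
proof (cases "i < n")
  case True
  have "neighbors n E i \<inter> neighbors n E x = {}"
  proof (intro equals0I)
    fix k assume "k \<in> neighbors n E i \<inter> neighbors n E x"
    then have "E i k" "E x k" by (auto simp: neighbors_def)
    then show False
      using component_edge_iff[OF graph, of x k x] component_edge_iff[OF graph, of i k x]
        component_self[OF x] i by blast
  qed
  moreover have "i \<noteq> x" using i component_self[OF x] by auto
  ultimately have "(s\<^sup>2 - 1) * Q i x = 0"
    using codegree_excess_decomp[OF True x] Px by (simp add: codegree_excess_def)
  then show ?thesis using s_sq_gt_1 by simp
qed (use supported_Q in \<open>simp add: fm_supported_def\<close>)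

text \<open>If P vanishes on the columns of a component C containing x, then on C the matrix
A^2 - 1 equals (s^2 - 1) Q. Taking absolute values of the s-eigenvector w = Q e_x cannot decrease
|A w|, which forces |w| into the range of Q.\<close>

lemma Q_abs_column_fixed:
  assumes x: "x < n" and Pcol: "\<And>j k. j \<in> component n E x \<Longrightarrow> P k j = 0" and i: "i < n"
  shows "fm_mult_vec n Q (\<lambda>k. \<bar>Q k x\<bar>) i = \<bar>Q i x\<bar>"
proof -
  define w where "w = (\<lambda>k. \<bar>Q k x\<bar>)"
  have Qcol: "Q k x = 0" if "k \<notin> component n E x" for k
    using Q_column_off_component[OF x Pcol[OF component_self[OF x]] that] .
  have eig: "fm_mult_vec n A (\<lambda>k. Q k x) k = s * Q k x" if "k < n" for k
    using fun_cong[OF fun_cong[OF eigen_Q, of k], of x] that x by (simp add: fm_mult_def fm_mult_vec_def)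
  have "s\<^sup>2 * (\<Sum>k<n. (w k)\<^sup>2) \<le> (\<Sum>k<n. (fm_mult_vec n A w k)\<^sup>2)"
    using fm_nonneg_abs_eigen[where A = A and y = "\<lambda>k. Q k x" and s = s] eig by (simp add: adj_fm_def w_def)
  also have "\<dots> = (\<Sum>k<n. (w k)\<^sup>2) + (s\<^sup>2 - 1) * fm_quad n Q w"
  proof -
    have "fm_quad n P w = 0"
      unfolding fm_quad_def using Qcol Pcol by (intro sum.neutral ballI) (auto simp: w_def)
    then show ?thesis
      by (simp add: fm_quad_square[OF sym_adj] square_decomp fm_quad_combination fm_quad_one)
  qed
  finally have "(s\<^sup>2 - 1) * (\<Sum>k<n. (w k)\<^sup>2) \<le> (s\<^sup>2 - 1) * fm_quad n Q w"
    by (simp add: algebra_simps)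
  then have "(\<Sum>k<n. (w k)\<^sup>2) \<le> fm_quad n Q w" using s_sq_gt_1 by simp
  then show ?thesis using fm_sym_idem_fixed[OF sym_Q idem_Q _ i] by (simp add: w_def)
qed

lemma component_meets_P_diag:
  assumes x: "x < n" and deg: "\<forall>w\<in>component n E x. degree n E w \<ge> 2"
  shows "\<exists>j\<in>component n E x. P j j \<noteq> 0"
proof (rule ccontr)
  assume "\<not> ?thesis"
  then have Pcol: "P k j = 0" if "j \<in> component n E x" for j k
    using that fm_sym_idem_diag_zero[OF sym_P idem_P supported_P] by blast
  have xC: "x \<in> component n E x" by (rule component_self[OF x])
  have "codegree_excess n E x x \<ge> 1" using deg xC degree_eq_codegree_excess[of n E x] by force
  then have "0 < (s\<^sup>2 - 1) * Q x x" using codegree_excess_decomp[OF x x] Pcol[OF xC] by simp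
  then have Qxx: "Q x x > 0" using s_sq_gt_1 zero_less_mult_pos by blast
  define w where "w = (\<lambda>k. \<bar>Q k x\<bar>)"
  have "fm_mult_vec n A w x = fm_mult_vec n A (fm_mult_vec n Q w) x"
    using Q_abs_column_fixed[OF x Pcol] by (intro fm_mult_vec_cong) (simp add: w_def)
  also have "\<dots> = s * w x"
    using fm_mult_vec_mult[OF x, of A Q w] Q_abs_column_fixed[OF x Pcol x]
    by (simp add: eigen_Q fm_mult_vec_scale_matrix w_def)
  finally have "fm_mult_vec n A w x = s * w x" .
  moreover have "fm_mult_vec n A w x \<ge> 0"
    unfolding fm_mult_vec_def by (intro sum_nonneg) (simp add: adj_fm_def w_def)
  moreover have "s * w x < 0" using s_lt_minus_1 Qxx by (simp add: w_def mult_neg_pos)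
  ultimately show False by simp
qed

lemma component_trace_ge_1:
  assumes x: "x < n" and deg: "\<forall>w\<in>component n E x. degree n E w \<ge> 2"
  shows "(\<Sum>i\<in>component n E x. P i i) \<ge> 1"
proof -
  obtain j where j: "j \<in> component n E x" "P j j \<noteq> 0" using component_meets_P_diag[OF x deg] by blast
  show ?thesis
    by (rule fm_sym_idem_fixed_trace_ge_1[OF sym_P idem_P _ _ j(1),
          where y = "\<lambda>k. if k \<in> component n E x then P k j else 0"])
      (use j component_less component_column_fixed[OF component_less[OF j(1)]] in auto)
qed

lemma unique_min_degree_2_component:
  "\<exists>C\<in>components n E. (\<forall>v\<in>C. degree n E v \<ge> 2) \<and>
     (\<forall>C'\<in>components n E. C' \<noteq> C \<longrightarrow> component_is_K2 E C')"
proof -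
  obtain x where x: "x < n" and dx: "\<forall>w\<in>component n E x. degree n E w \<ge> 2"
    using exists_min_degree_2_component by blast
  have "component_is_K2 E (component n E y)" if y: "y < n" and ne: "component n E y \<noteq> component n E x" for y
  proof (rule ccontr)
    assume "\<not> component_is_K2 E (component n E y)"
    then have dy: "\<forall>w\<in>component n E y. degree n E w \<ge> 2"
      using component_K2_or_min_degree_2[OF y] by blast
    have fin: "finite (component n E x)" "finite (component n E y)"
      by (auto intro: finite_subset[of _ "{..<n}"] dest: component_less)
    have "2 \<le> (\<Sum>i\<in>component n E x. P i i) + (\<Sum>i\<in>component n E y. P i i)"
      using component_trace_ge_1[OF x dx] component_trace_ge_1[OF y dy] by simp
    also have "\<dots> = (\<Sum>i\<in>component n E x \<union> component n E y. P i i)"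
      by (rule sum.union_disjoint[OF fin component_disjoint[OF graph ne[symmetric]], symmetric])
    also have "\<dots> \<le> fm_trace n P"
      unfolding fm_trace_def using fm_sym_idem_diag_nonneg[OF sym_P idem_P]
      by (intro sum_mono2) (auto dest: component_less)
    finally show False using trace_P by simp
  qed
  then show ?thesis
    unfolding components_eq_image using x dx by (intro bexI[of _ "component n E x"]) auto
qed

end

theorem lemma2p3:
  fixes n :: nat and E :: "nat \<Rightarrow> nat \<Rightarrow> bool" and r s :: real
  assumes G: "simple_graph n E"
    and r: "r > 1" and s: "s < -1"
    and spec: "\<exists>a b. char_poly (adj_matrix n E) =
                 [:-r, 1:] * [:-s, 1:] * [:-1, 1:] ^ a * [:1, 1:] ^ b"
  shows "(\<exists>C\<in>components n E. (\<forall>v\<in>C. degree n E v \<ge> 2) \<and>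
            (\<forall>C'\<in>components n E. C' \<noteq> C \<longrightarrow> component_is_K2 E C'))
       \<and> (\<forall>u v. u < n \<longrightarrow> v < n \<longrightarrow> u \<noteq> v \<longrightarrow>
            neighbors n E u \<subseteq> neighbors n E v \<longrightarrow>
            int (degree n E v) - int (degree n E u) \<ge> 3)"
proof -
  obtain a b where cp: "char_poly (adj_matrix n E) = [:-r, 1:] * [:-s, 1:] * [:-1, 1:] ^ a * [:1, 1:] ^ b"
    using spec by blast
  define es where "es = [r, s] @ replicate a 1 @ replicate b (-1::real)"
  have "char_poly (adj_matrix n E) = (\<Prod>e\<leftarrow>es. [:-e, 1:])"
    unfolding cp es_def by (rule prod_list_two_eigen_factors [symmetric])
  then obtain B where sim: "fm_similar n (adj_fm E) B" and B: "fm_supported n B" "fm_upper B"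
    and diag: "map (\<lambda>i. B i i) [0..<n] = es"
    by (rule adjacency_triangularization[OF G])
  have sym: "fm_sym (adj_fm E)" and supp: "fm_supported n (adj_fm E)"
    using G by (rule fm_sym_adj_fm, rule fm_supported_adj_fm)
  have "fm_shift_prod n (adj_fm E) [r, s, 1, -1] = (\<lambda>_ _. 0)"
    using fm_similar_upper_cayley_hamilton[OF sim B] diag
    by (intro fm_sym_annihilator_squarefree[OF supp sym]) (simp add: es_def)
  moreover have "fm_trace n (fm_shift_prod n (adj_fm E) [s, 1, -1]) = (r - s) * (r - 1) * (r + 1)"
    by (subst fm_similar_upper_trace[OF sim B(2)]) (simp add: diag es_def sum_list_replicate)
  ultimately obtain P Q where "two_eigen_decomp n (adj_fm E) r s P Q"
    using two_eigen_decomp_exists[OF supp sym r s] by blast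
  then interpret two_eigen_graph n E r s P Q
    using G by (simp add: two_eigen_graph_def two_eigen_graph_axioms_def)
  show ?thesis using unique_min_degree_2_component nested_neighbors_degree_gap by blast
qed

end
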